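(* Let $G=(V,E)$ be a graph, let $V_{cover}\subseteq V$ be a vertex cover of $G$, and let $G'$ be a core subgraph of $G$ formed using $V_{cover}$. If $M'$ is a $(1+\epsilon)$-MCM in $G'$, then $M'$ is also a $(1+\epsilon)$-MCM in $G$.
   Context: A vertex cover is a set of vertices containing at least one endpoint of every edge. Given $G$ and a vertex cover $V_{cover}$, a core subgraph $G'$ consists of: all edges of $G$ with both endpoints in $V_{cover}$; and, for each $v\in V_{cover}$, $|V_{cover}|+1$ edges from $v$ to vertices in $V\setminus V_{cover}$ (all such edges if $v$ has fewer), chosen arbitrarily in an unweighted graph (and of maximum weight in a weighted graph). A matching $M$ of a graph $H$ is a $(1+\epsilon)$-MCM if $|M|\ge\frac{1}{1+\epsilon}$ times the size of a maximum cardinality matching of $H$. *)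

theory Defs
  imports Complex_Main
begin

definition graph :: "'a set \<Rightarrow> 'a set set \<Rightarrow> bool" where
  "graph V E \<longleftrightarrow> finite V \<and> (\<forall>e\<in>E. \<exists>u v. e = {u, v} \<and> u \<noteq> v \<and> u \<in> V \<and> v \<in> V)"

definition matching :: "'a set set \<Rightarrow> 'a set set \<Rightarrow> bool" where
  "matching E M \<longleftrightarrow> M \<subseteq> E \<and> (\<forall>e1\<in>M. \<forall>e2\<in>M. e1 \<noteq> e2 \<longrightarrow> e1 \<inter> e2 = {})"

definition mcm_size :: "'a set set \<Rightarrow> nat" where
  "mcm_size E = Max (card ` {M. matching E M})"

definition approx_mcm :: "real \<Rightarrow> 'a set set \<Rightarrow> 'a set set \<Rightarrow> bool" where
  "approx_mcm eps E M \<longleftrightarrow> matching E M \<and> real (card M) \<ge> real (mcm_size E) / (1 + eps)"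

definition vertex_cover :: "'a set \<Rightarrow> 'a set set \<Rightarrow> 'a set \<Rightarrow> bool" where
  "vertex_cover V E C \<longleftrightarrow> C \<subseteq> V \<and> (\<forall>e\<in>E. e \<inter> C \<noteq> {})"

definition out_edges :: "'a set \<Rightarrow> 'a set set \<Rightarrow> 'a set \<Rightarrow> 'a \<Rightarrow> 'a set set" where
  "out_edges V E C v = {e \<in> E. \<exists>u. e = {v, u} \<and> u \<in> V - C}"

definition core_subgraph :: "'a set \<Rightarrow> 'a set set \<Rightarrow> 'a set \<Rightarrow> 'a set set \<Rightarrow> bool" where
  "core_subgraph V E C E' \<longleftrightarrow>
     (\<exists>S. (\<forall>v\<in>C. S v \<subseteq> out_edges V E C v \<and>
                  card (S v) = min (card (out_edges V E C v)) (card C + 1)) \<and>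
          E' = {e \<in> E. e \<subseteq> C} \<union> (\<Union>v\<in>C. S v))"

end

theory Submission
  imports Defs
begin

text \<open>Every maximum matching of G can be moved into G' without losing size, so both graphs
  have the same matching number and the approximation guarantee transfers. To move a matching
  edge e = {v,u} (v in the cover, u outside) that is missing from G': the star of v was then
  truncated, so G' keeps |C|+1 edges from v to distinct vertices outside C. The other matching
  edges avoid v and each contains a cover vertex, so they cover at most |C| vertices outside C
  and leave one of these star edges free; swap it in for e.\<close>

lemma graph_edge_subset: "graph V E \<Longrightarrow> e \<in> E \<Longrightarrow> e \<subseteq> V"
  unfolding graph_def by auto

lemma graph_finite_edges:
  assumes "graph V E"
  shows "finite E"
proof -
  have "E \<subseteq> Pow V"
    using assms graph_edge_subset by blast
  then show ?thesis
    using assms unfolding graph_def by (meson finite_Pow_iff finite_subset)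
qed

lemma vertex_cover_finite:
  "graph V E \<Longrightarrow> vertex_cover V E C \<Longrightarrow> finite C"
  unfolding graph_def vertex_cover_def using finite_subset by blast

lemma matching_subset: "matching E M \<Longrightarrow> M \<subseteq> E"
  unfolding matching_def by blast

lemma matching_mono: "matching E M \<Longrightarrow> E \<subseteq> F \<Longrightarrow> matching F M"
  unfolding matching_def by blast

lemma matching_disjoint: "matching E M \<Longrightarrow> g \<in> M \<Longrightarrow> h \<in> M \<Longrightarrow> g \<noteq> h \<Longrightarrow> g \<inter> h = {}"
  unfolding matching_def by blast

lemma finite_matchings: "finite E \<Longrightarrow> finite {M. matching E M}"
  by (rule finite_subset[of _ "Pow E"]) (auto simp: matching_def)

lemma card_le_mcm_size:
  assumes "finite E" "matching E M"
  shows "card M \<le> mcm_size E"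
  unfolding mcm_size_def using assms finite_matchings by (intro Max_ge) auto

lemma mcm_size_attained:
  assumes "finite E"
  obtains M where "matching E M" "card M = mcm_size E"
proof -
  have "matching E {}"
    unfolding matching_def by blast
  then have "mcm_size E \<in> card ` {M. matching E M}"
    unfolding mcm_size_def using assms finite_matchings by (intro Max_in) auto
  then show ?thesis
    using that by auto
qed

lemma mcm_size_mono:
  assumes "finite E" "E' \<subseteq> E"
  shows "mcm_size E' \<le> mcm_size E"
proof -
  obtain M where "matching E' M" "card M = mcm_size E'"
    using mcm_size_attained assms finite_subset by metis
  then show ?thesis
    using assms card_le_mcm_size matching_mono by metis
qed

lemma approx_mcm_supergraph:
  assumes "E' \<subseteq> E" "mcm_size E' = mcm_size E" "approx_mcm eps E' M"
  shows "approx_mcm eps E M"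
  using assms matching_mono unfolding approx_mcm_def by metis

lemma matching_card_le_vertex_cover:
  assumes "matching E M" "vertex_cover V E C" "finite C"
  shows "card M \<le> card C"
proof -
  define cover_vertex where "cover_vertex g = (SOME c. c \<in> g \<inter> C)" for g
  have cover_vertex: "cover_vertex g \<in> g \<inter> C" if "g \<in> M" for g
  proof -
    have "g \<inter> C \<noteq> {}"
      using that assms(1,2) matching_subset unfolding vertex_cover_def by blast
    then show ?thesis
      unfolding cover_vertex_def by (rule some_in_eq[THEN iffD2])
  qed
  have "inj_on cover_vertex M"
  proof (rule inj_onI)
    fix g h assume "g \<in> M" "h \<in> M" "cover_vertex g = cover_vertex h"
    then have "cover_vertex g \<in> g \<inter> h"
      using cover_vertex[of g] cover_vertex[of h] by simp
    then show "g = h"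
      using matching_disjoint[OF assms(1) \<open>g \<in> M\<close> \<open>h \<in> M\<close>] by auto
  qed
  moreover have "cover_vertex ` M \<subseteq> C"
    using cover_vertex by blast
  ultimately show ?thesis
    using assms(3) by (rule card_inj_on_le)
qed

text \<open>Each edge meets the cover, so it has at most one endpoint outside it.\<close>
lemma card_matched_outside_cover_le:
  assumes "graph V E" "vertex_cover V E C" "matching E M"
  shows "card (\<Union>M - C) \<le> card M"
proof -
  have fin: "finite M"
    using finite_subset[OF matching_subset[OF assms(3)] graph_finite_edges[OF assms(1)]] .
  have outside_le_1: "card (g - C) \<le> 1" if "g \<in> M" for g
  proof -
    have "g \<in> E"
      using that assms(3) matching_subset by blast
    then obtain x y where "g = {x, y}"
      using assms(1) unfolding graph_def by blast
    moreover have "g \<inter> C \<noteq> {}"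
      using \<open>g \<in> E\<close> assms(2) unfolding vertex_cover_def by blast
    ultimately have "g - C \<subseteq> {x} \<or> g - C \<subseteq> {y}"
      by blast
    then show ?thesis
      using card_mono[of "{_}" "g - C"] by fastforce
  qed
  have "card (\<Union>M - C) = card (\<Union>g\<in>M. g - C)"
    by (rule arg_cong[where f = card]) blast
  also have "\<dots> \<le> (\<Sum>g\<in>M. card (g - C))"
    using fin by (rule card_UN_le)
  also have "\<dots> \<le> (\<Sum>g\<in>M. 1)"
    using outside_le_1 by (intro sum_mono) auto
  finally show ?thesis
    by simp
qed

lemma free_edge_in_large_star:
  assumes "graph V E" "vertex_cover V E C" "matching E M" "v \<notin> \<Union>M"
    and "F \<subseteq> out_edges V E C v" "card C < card F"
  shows "\<exists>f\<in>F. \<forall>g\<in>M. f \<inter> g = {}"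
proof (rule ccontr)
  assume blocked: "\<not> ?thesis"
  have "\<Union>M \<subseteq> V"
    using assms(1,3) matching_subset graph_edge_subset by blast
  then have fin: "finite (\<Union>M - C)"
    using assms(1) unfolding graph_def by (meson finite_Diff finite_subset)
  have "F \<subseteq> (\<lambda>w. {v, w}) ` (\<Union>M - C)"
  proof
    fix f assume "f \<in> F"
    then obtain w where w: "f = {v, w}" "w \<notin> C"
      using assms(5) unfolding out_edges_def by blast
    obtain g where "g \<in> M" "f \<inter> g \<noteq> {}"
      using blocked \<open>f \<in> F\<close> by blast
    then have "w \<in> \<Union>M"
      using w(1) assms(4) by blast
    then show "f \<in> (\<lambda>w. {v, w}) ` (\<Union>M - C)"
      using w by blast
  qed
  then have "card F \<le> card ((\<lambda>w. {v, w}) ` (\<Union>M - C))"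
    using fin by (simp add: card_mono)
  also have "\<dots> \<le> card (\<Union>M - C)"
    using fin by (rule card_image_le)
  also have "\<dots> \<le> card M"
    using assms(1-3) by (rule card_matched_outside_cover_le)
  also have "\<dots> \<le> card C"
    using assms(1-3) vertex_cover_finite matching_card_le_vertex_cover by blast
  finally show False
    using assms(6) by simp
qed

lemma crossing_edge_in_out_edges:
  assumes "graph V E" "vertex_cover V E C" "e \<in> E" "\<not> e \<subseteq> C"
  obtains v where "v \<in> C" "e \<in> out_edges V E C v"
proof -
  obtain x y where xy: "e = {x, y}" "x \<in> V" "y \<in> V"
    using assms(1,3) unfolding graph_def by blast
  have "e \<inter> C \<noteq> {}"
    using assms(2,3) unfolding vertex_cover_def by blast
  then consider "x \<in> C" "y \<notin> C" | "y \<in> C" "x \<notin> C"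
    using assms(4) xy(1) by blast
  then show ?thesis
  proof cases
    case 1
    then show ?thesis
      using that[of x] xy assms(3) unfolding out_edges_def by blast
  next
    case 2
    then show ?thesis
      using that[of y] xy assms(3) insert_commute[of x y] unfolding out_edges_def by blast
  qed
qed

lemma core_subgraph_subset: "core_subgraph V E C E' \<Longrightarrow> E' \<subseteq> E"
  unfolding core_subgraph_def out_edges_def by blast

text \<open>A core subgraph truncates the star of v only when it has more than |C|+1 edges.\<close>
lemma core_subgraph_saturated_star:
  assumes "graph V E" "core_subgraph V E C E'" "v \<in> C"
    and "e \<in> out_edges V E C v" "e \<notin> E'"
  obtains F where "F \<subseteq> E'" "F \<subseteq> out_edges V E C v" "card F = card C + 1"
proof -
  obtain S where S: "S v \<subseteq> out_edges V E C v"
      "card (S v) = min (card (out_edges V E C v)) (card C + 1)"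
    and E': "E' = {e \<in> E. e \<subseteq> C} \<union> (\<Union>v\<in>C. S v)"
    using assms(2,3) unfolding core_subgraph_def by blast
  have "finite (out_edges V E C v)"
    using graph_finite_edges[OF assms(1)] unfolding out_edges_def by simp
  then have "S v \<noteq> out_edges V E C v \<longrightarrow> card (S v) = card C + 1"
    using S card_subset_eq by (metis min_def)
  moreover have "S v \<noteq> out_edges V E C v"
    using assms(3-5) E' by blast
  ultimately show ?thesis
    using that S E' assms(3) by blast
qed

lemma matching_exchange_into_core:
  assumes "graph V E" "vertex_cover V E C" "core_subgraph V E C E'"
    and "matching E M" "e \<in> M" "e \<notin> E'"
  shows "\<exists>f\<in>E'. f \<notin> M \<and> matching E (insert f (M - {e}))"
proof -
  have "e \<in> E"
    using assms(4,5) matching_subset by blast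
  moreover have "\<not> e \<subseteq> C"
    using assms(3,6) \<open>e \<in> E\<close> unfolding core_subgraph_def by blast
  ultimately obtain v where v: "v \<in> C" "e \<in> out_edges V E C v"
    using assms(1,2) crossing_edge_in_out_edges by blast
  obtain F where F: "F \<subseteq> E'" "F \<subseteq> out_edges V E C v" "card F = card C + 1"
    using core_subgraph_saturated_star[OF assms(1,3) v assms(6)] .
  have rest: "matching E (M - {e})"
    using assms(4) unfolding matching_def by blast
  have "v \<notin> \<Union>(M - {e})"
    using v(2) matching_disjoint[OF assms(4,5)] unfolding out_edges_def by blast
  then obtain f where f: "f \<in> F" "\<forall>g\<in>M - {e}. f \<inter> g = {}"
    using free_edge_in_large_star[OF assms(1,2) rest _ F(2)] F(3) by auto
  have "f \<in> E" "f \<noteq> {}"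
    using f(1) F(2) unfolding out_edges_def by auto
  then have "matching E (insert f (M - {e}))"
    using rest f(2) unfolding matching_def by blast
  moreover have "f \<notin> M"
    using f F(1) assms(6) \<open>f \<noteq> {}\<close> by blast
  ultimately show ?thesis
    using f(1) F(1) by blast
qed

lemma matching_into_core_subgraph:
  assumes "graph V E" "vertex_cover V E C" "core_subgraph V E C E'" "matching E M"
  shows "\<exists>M'. matching E' M' \<and> card M' = card M"
  using assms(4)
proof (induction "card (M - E')" arbitrary: M)
  case 0
  have "finite M"
    using finite_subset[OF matching_subset[OF "0.prems"] graph_finite_edges[OF assms(1)]] .
  then have "M \<subseteq> E'"
    using "0.hyps" by simp
  then have "matching E' M"
    using "0.prems" unfolding matching_def by blast
  then show ?case
    by blast
next
  case (Suc n)
  have fin: "finite M"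
    using finite_subset[OF matching_subset[OF Suc.prems] graph_finite_edges[OF assms(1)]] .
  have "M - E' \<noteq> {}"
    using Suc.hyps(2) card.empty by (metis Zero_not_Suc)
  then obtain e where e: "e \<in> M" "e \<notin> E'"
    by blast
  obtain f where f: "f \<in> E'" "f \<notin> M" "matching E (insert f (M - {e}))"
    using matching_exchange_into_core[OF assms(1-3) Suc.prems e] by blast
  have "insert f (M - {e}) - E' = (M - E') - {e}"
    using f(1) by blast
  then have "card (insert f (M - {e}) - E') = n"
    using Suc.hyps(2) fin e by simp
  then obtain M' where "matching E' M'" "card M' = card (insert f (M - {e}))"
    using Suc.hyps(1) f(3) by blast
  moreover have "card (insert f (M - {e})) = card M"
    using fin e(1) f(2) card_Suc_Diff1[OF fin e(1)] by simp
  ultimately show ?case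
    by auto
qed

lemma mcm_size_core_subgraph:
  assumes "graph V E" "vertex_cover V E C" "core_subgraph V E C E'"
  shows "mcm_size E' = mcm_size E"
proof -
  have sub: "E' \<subseteq> E"
    using assms(3) by (rule core_subgraph_subset)
  have fin: "finite E"
    using assms(1) by (rule graph_finite_edges)
  obtain M where M: "matching E M" "card M = mcm_size E"
    using mcm_size_attained[OF fin] .
  obtain M' where "matching E' M'" "card M' = card M"
    using matching_into_core_subgraph[OF assms M(1)] by blast
  then have "mcm_size E \<le> mcm_size E'"
    using card_le_mcm_size[OF finite_subset[OF sub fin]] M(2) by metis
  moreover have "mcm_size E' \<le> mcm_size E"
    using fin sub by (rule mcm_size_mono)
  ultimately show ?thesis
    by simp
qed

theorem lemma4:
  fixes V C :: "'a set" and E E' M :: "'a set set" and eps :: real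
  assumes "graph V E"
    and "vertex_cover V E C"
    and "core_subgraph V E C E'"
    and "eps > 0"
    and "approx_mcm eps E' M"
  shows "approx_mcm eps E M"
  using core_subgraph_subset[OF assms(3)] mcm_size_core_subgraph[OF assms(1-3)] assms(5)
  by (rule approx_mcm_supergraph)

end
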